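(* Let $\mathcal V$ be a multivector field on $X$, where $X$ is invariant, and let $R\subset X$. The following are equivalent: (1) $R$ is a repeller; (2) $R$ is open, $\mathcal V$-compatible and invariant; (3) $R$ is an open isolated invariant set.
   Context: $X$ is a finite $T_0$ topological space. For $A\subset X$, $\operatorname{cl}A$ is its closure and $\operatorname{mo}A:=\operatorname{cl}A\setminus A$. $A$ is locally closed if it is the intersection of an open and a closed subset of $X$. $H$ denotes relative singular homology. A multivector is a nonempty locally closed subset of $X$; a multivector field $\mathcal V$ on $X$ is a partition of $X$ into multivectors. For $x\in X$, $[x]$ denotes the element of $\mathcal V$ containing $x$. A multivector $V$ is critical if $H(\operatorname{cl}V,\operatorname{mo}V)\neq0$, regular otherwise. $A\subset X$ is $\mathcal V$-compatible if for every $x\in X$ either $[x]\cap A=\emptyset$ or $[x]\subset A$. Put $\Pi_{\mathcal V}(x):=[x]\cup\operatorname{cl}\{x\}$, $\Pi_{\mathcal V}(A):=\bigcup_{x\in A}\Pi_{\mathcal V}(x)$ and $\Pi_{\mathcal V}^{-1}(A):=\{x\in X:\Pi_{\mathcal V}(x)\cap A\neq\emptyset\}$. A $\mathbb Z$-interval is $\mathbb Z\cap I$ for a real interval $I$. A solution in $A\subset X$ is a map $\varphi:D\to A$ on a $\mathbb Z$-interval $D$ with $\varphi(i+1)\in\Pi_{\mathcal V}(\varphi(i))$ whenever $i,i+1\in D$; it is full if $D=\mathbb Z$, and a path if $D$ is bounded, its endpoints being $\varphi(\min D)$ and $\varphi(\max D)$. A full solution $\varphi$ is essential if for every $t\in\mathbb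 Z$ with $[\varphi(t)]$ regular, the set $\{s\in\mathbb Z:\varphi(s)\notin[\varphi(t)]\}$ is unbounded below and unbounded above. $\operatorname{Inv}A$ is the set of $x\in A$ such that there is an essential full solution $\varphi$ with image in $A$ and $\varphi(0)=x$; $A$ is invariant if $\operatorname{Inv}A=A$. A closed set $N$ isolates an invariant set $S\subset N$ if (a) every path in $N$ with both endpoints in $S$ has image contained in $S$, and (b) $\Pi_{\mathcal V}(S)\subset N$. An invariant set is an isolated invariant set if some closed set isolates it. An invariant set $R$ is a repeller if $\Pi_{\mathcal V}^{-1}(R)=R$. *)

theory Defs
  imports "HOL-Analysis.Analysis" "HOL-Homology.Homology"
begin

definition finite_T0_space :: "'a topology \<Rightarrow> bool" where
  "finite_T0_space X \<longleftrightarrow> finite (topspace X) \<and> t0_space X"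

definition locally_closed_in :: "'a topology \<Rightarrow> 'a set \<Rightarrow> bool" where
  "locally_closed_in X A \<longleftrightarrow> (\<exists>U C. openin X U \<and> closedin X C \<and> A = U \<inter> C)"

definition mo :: "'a topology \<Rightarrow> 'a set \<Rightarrow> 'a set" where
  "mo X A = X closure_of A - A"

definition multivector :: "'a topology \<Rightarrow> 'a set \<Rightarrow> bool" where
  "multivector X A \<longleftrightarrow> A \<noteq> {} \<and> locally_closed_in X A"

definition multivector_field :: "'a topology \<Rightarrow> 'a set set \<Rightarrow> bool" where
  "multivector_field X V \<longleftrightarrow>
     (\<forall>A\<in>V. multivector X A) \<and> \<Union>V = topspace X \<and>
     (\<forall>A\<in>V. \<forall>B\<in>V. A \<noteq> B \<longrightarrow> A \<inter> B = {})"

definition cell :: "'a set set \<Rightarrow> 'a \<Rightarrow> 'a set" where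
  "cell V x = (THE A. A \<in> V \<and> x \<in> A)"

text \<open>Critical multivector: H(cl A, mo A) \<noteq> 0 (relative singular homology,
  integer coefficients, some degree p).\<close>
definition critical :: "'a topology \<Rightarrow> 'a set \<Rightarrow> bool" where
  "critical X A \<longleftrightarrow>
     (\<exists>p. \<not> trivial_group (relative_homology_group p (subtopology X (X closure_of A)) (mo X A)))"

definition regular :: "'a topology \<Rightarrow> 'a set \<Rightarrow> bool" where
  "regular X A \<longleftrightarrow> \<not> critical X A"

definition compatible :: "'a topology \<Rightarrow> 'a set set \<Rightarrow> 'a set \<Rightarrow> bool" where
  "compatible X V A \<longleftrightarrow>
     (\<forall>x\<in>topspace X. cell V x \<inter> A = {} \<or> cell V x \<subseteq> A)"

definition Pi_V :: "'a topology \<Rightarrow> 'a set set \<Rightarrow> 'a \<Rightarrow> 'a set" where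
  "Pi_V X V x = cell V x \<union> X closure_of {x}"

definition Pi_V_set :: "'a topology \<Rightarrow> 'a set set \<Rightarrow> 'a set \<Rightarrow> 'a set" where
  "Pi_V_set X V A = (\<Union>x\<in>A. Pi_V X V x)"

definition Pi_V_inv :: "'a topology \<Rightarrow> 'a set set \<Rightarrow> 'a set \<Rightarrow> 'a set" where
  "Pi_V_inv X V A = {x \<in> topspace X. Pi_V X V x \<inter> A \<noteq> {}}"

text \<open>Z-intervals: intersections of Z with a real interval (order-convex sets of integers).\<close>
definition Z_interval :: "int set \<Rightarrow> bool" where
  "Z_interval D \<longleftrightarrow> (\<forall>i\<in>D. \<forall>k\<in>D. \<forall>j. i \<le> j \<and> j \<le> k \<longrightarrow> j \<in> D)"

definition solution :: "'a topology \<Rightarrow> 'a set set \<Rightarrow> 'a set \<Rightarrow> int set \<Rightarrow> (int \<Rightarrow> 'a) \<Rightarrow> bool" where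
  "solution X V A D \<phi> \<longleftrightarrow> Z_interval D \<and> \<phi> ` D \<subseteq> A \<and>
     (\<forall>i. i \<in> D \<and> i + 1 \<in> D \<longrightarrow> \<phi> (i + 1) \<in> Pi_V X V (\<phi> i))"

definition full_solution :: "'a topology \<Rightarrow> 'a set set \<Rightarrow> 'a set \<Rightarrow> (int \<Rightarrow> 'a) \<Rightarrow> bool" where
  "full_solution X V A \<phi> \<longleftrightarrow> solution X V A UNIV \<phi>"

text \<open>A path: solution on a bounded (nonempty, so that it has endpoints) Z-interval.\<close>
definition path_in :: "'a topology \<Rightarrow> 'a set set \<Rightarrow> 'a set \<Rightarrow> int set \<Rightarrow> (int \<Rightarrow> 'a) \<Rightarrow> bool" where
  "path_in X V A D \<phi> \<longleftrightarrow> solution X V A D \<phi> \<and> D \<noteq> {} \<and> bdd_above D \<and> bdd_below D"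

definition unbounded_both :: "int set \<Rightarrow> bool" where
  "unbounded_both S \<longleftrightarrow> (\<forall>n. \<exists>s\<in>S. s < n) \<and> (\<forall>n. \<exists>s\<in>S. n < s)"

definition essential :: "'a topology \<Rightarrow> 'a set set \<Rightarrow> (int \<Rightarrow> 'a) \<Rightarrow> bool" where
  "essential X V \<phi> \<longleftrightarrow>
     (\<forall>t. regular X (cell V (\<phi> t)) \<longrightarrow> unbounded_both {s. \<phi> s \<notin> cell V (\<phi> t)})"

definition Inv :: "'a topology \<Rightarrow> 'a set set \<Rightarrow> 'a set \<Rightarrow> 'a set" where
  "Inv X V A = {x \<in> A. \<exists>\<phi>. full_solution X V A \<phi> \<and> essential X V \<phi> \<and> \<phi> 0 = x}"

definition invariant :: "'a topology \<Rightarrow> 'a set set \<Rightarrow> 'a set \<Rightarrow> bool" where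
  "invariant X V A \<longleftrightarrow> Inv X V A = A"

definition isolates :: "'a topology \<Rightarrow> 'a set set \<Rightarrow> 'a set \<Rightarrow> 'a set \<Rightarrow> bool" where
  "isolates X V N S \<longleftrightarrow> closedin X N \<and> S \<subseteq> N \<and>
     (\<forall>D \<phi>. path_in X V N D \<phi> \<and> \<phi> (Min D) \<in> S \<and> \<phi> (Max D) \<in> S \<longrightarrow> \<phi> ` D \<subseteq> S) \<and>
     Pi_V_set X V S \<subseteq> N"

definition isolated_invariant :: "'a topology \<Rightarrow> 'a set set \<Rightarrow> 'a set \<Rightarrow> bool" where
  "isolated_invariant X V S \<longleftrightarrow> invariant X V S \<and> (\<exists>N. isolates X V N S)"

definition repeller :: "'a topology \<Rightarrow> 'a set set \<Rightarrow> 'a set \<Rightarrow> bool" where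
  "repeller X V R \<longleftrightarrow> invariant X V R \<and> Pi_V_inv X V R = R"

end

theory Submission
  imports Defs
begin

text \<open>The condition \<open>\<Pi>\<^sup>-\<^sup>1(R) = R\<close> says that \<open>R\<close> is closed under the two
  relations making up \<open>\<Pi>\<close>: under \<open>y \<in> cl {x}\<close> backwards, which in a finite space
  is openness, and under \<open>y \<in> [x]\<close>, which is \<open>\<V>\<close>-compatibility. A set with
  \<open>\<Pi>\<^sup>-\<^sup>1(R) = R\<close> cannot be entered by a solution, so any path ending in \<open>R\<close> stays
  in \<open>R\<close> and the whole space isolates it. Conversely, any two points \<open>y, z\<close> of one
  multivector give a path \<open>y, z, y\<close>; if \<open>y \<in> R\<close> and \<open>N\<close> isolates \<open>R\<close>, then
  \<open>z \<in> \<Pi>(R) \<subseteq> N\<close> and the path forces \<open>z \<in> R\<close>, which is compatibility.\<close>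

lemma cell_in_field:
  assumes "multivector_field X V" "x \<in> topspace X"
  shows "cell V x \<in> V" and mem_cell: "x \<in> cell V x"
proof -
  obtain A where A: "A \<in> V" "x \<in> A"
    using assms unfolding multivector_field_def by blast
  have "cell V x = A"
    unfolding cell_def
  proof (rule the_equality)
    show "\<And>B. B \<in> V \<and> x \<in> B \<Longrightarrow> B = A"
      using A assms(1) unfolding multivector_field_def by blast
  qed (use A in simp)
  then show "cell V x \<in> V" "x \<in> cell V x" using A by simp_all
qed

lemma cell_subset_topspace:
  assumes "multivector_field X V" "x \<in> topspace X"
  shows "cell V x \<subseteq> topspace X"
  using cell_in_field[OF assms] assms(1) unfolding multivector_field_def by blast

lemma cell_eq_cell:
  assumes "multivector_field X V" "x \<in> topspace X" "z \<in> cell V x"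
  shows "cell V z = cell V x"
proof -
  have "z \<in> topspace X" using cell_subset_topspace[OF assms(1,2)] assms(3) by blast
  then show ?thesis
    using cell_in_field[OF assms(1)] cell_in_field[OF assms(1,2)] assms(1,3)
    unfolding multivector_field_def by blast
qed

lemma mem_Pi_V:
  assumes "multivector_field X V" "x \<in> topspace X"
  shows "x \<in> Pi_V X V x"
  using mem_cell[OF assms] unfolding Pi_V_def by blast

lemma compatible_iff_cell_meets:
  assumes "multivector_field X V"
  shows "compatible X V R \<longleftrightarrow> (\<forall>x\<in>topspace X. cell V x \<inter> R \<noteq> {} \<longrightarrow> x \<in> R)"
proof
  assume "compatible X V R"
  then show "\<forall>x\<in>topspace X. cell V x \<inter> R \<noteq> {} \<longrightarrow> x \<in> R"
    using mem_cell[OF assms] unfolding compatible_def by blast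
next
  assume meets: "\<forall>x\<in>topspace X. cell V x \<inter> R \<noteq> {} \<longrightarrow> x \<in> R"
  have "cell V x \<subseteq> R" if "x \<in> topspace X" "cell V x \<inter> R \<noteq> {}" for x
  proof
    fix z assume z: "z \<in> cell V x"
    then have "z \<in> topspace X" using cell_subset_topspace[OF assms that(1)] by blast
    then show "z \<in> R" using meets that(2) cell_eq_cell[OF assms that(1) z] by auto
  qed
  then show "compatible X V R" unfolding compatible_def by blast
qed

text \<open>In a finite space every point has a smallest open neighbourhood, so open
  sets are exactly the up-sets of the specialization order.\<close>

lemma finite_openin_iff_closure_of_meets:
  assumes "finite (topspace X)"
  shows "openin X R \<longleftrightarrow>
    R \<subseteq> topspace X \<and> (\<forall>x\<in>topspace X. X closure_of {x} \<inter> R \<noteq> {} \<longrightarrow> x \<in> R)"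
proof
  assume "openin X R"
  then show "R \<subseteq> topspace X \<and> (\<forall>x\<in>topspace X. X closure_of {x} \<inter> R \<noteq> {} \<longrightarrow> x \<in> R)"
    unfolding closure_of_def using openin_subset by blast
next
  assume R: "R \<subseteq> topspace X \<and> (\<forall>x\<in>topspace X. X closure_of {x} \<inter> R \<noteq> {} \<longrightarrow> x \<in> R)"
  have "topspace X - R = (\<Union>x\<in>topspace X - R. X closure_of {x})"
    using R closure_of_subset[of "{_}" X] closure_of_subset_topspace by fastforce
  moreover have "closedin X (\<Union>x\<in>topspace X - R. X closure_of {x})"
    using assms by (intro closedin_Union) auto
  ultimately show "openin X R" using R openin_closedin_eq by metis
qed

lemma Pi_V_inv_eq_iff_open_compatible:
  assumes "finite (topspace X)" "multivector_field X V" "R \<subseteq> topspace X"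
  shows "Pi_V_inv X V R = R \<longleftrightarrow> openin X R \<and> compatible X V R"
proof -
  have "Pi_V_inv X V R = R \<longleftrightarrow> (\<forall>x\<in>topspace X. Pi_V X V x \<inter> R \<noteq> {} \<longrightarrow> x \<in> R)"
    using assms(3) mem_Pi_V[OF assms(2)] unfolding Pi_V_inv_def by blast
  also have "\<dots> \<longleftrightarrow> (\<forall>x\<in>topspace X. X closure_of {x} \<inter> R \<noteq> {} \<longrightarrow> x \<in> R)
                  \<and> (\<forall>x\<in>topspace X. cell V x \<inter> R \<noteq> {} \<longrightarrow> x \<in> R)"
    unfolding Pi_V_def by blast
  finally show ?thesis
    using assms(3)
    by (simp add: finite_openin_iff_closure_of_meets[OF assms(1)]
                  compatible_iff_cell_meets[OF assms(2)])
qed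

lemma path_in_finite:
  assumes "path_in X V N D \<phi>"
  shows "finite D"
proof -
  obtain a b where "D \<subseteq> {a..b}"
    using assms unfolding path_in_def bdd_above_def bdd_below_def
    by (meson atLeastAtMost_iff subsetI)
  then show ?thesis using finite_subset by blast
qed

lemma path_in_subset_if_Max_mem:
  assumes path: "path_in X V N D \<phi>" and "N \<subseteq> topspace X"
    and backward: "Pi_V_inv X V R \<subseteq> R" and "\<phi> (Max D) \<in> R"
  shows "\<phi> ` D \<subseteq> R"
proof -
  have D: "Z_interval D" "\<phi> ` D \<subseteq> N"
    "\<And>i. i \<in> D \<Longrightarrow> i + 1 \<in> D \<Longrightarrow> \<phi> (i + 1) \<in> Pi_V X V (\<phi> i)"
    using path unfolding path_in_def solution_def by auto
  have Max: "Max D \<in> D" "\<And>i. i \<in> D \<Longrightarrow> i \<le> Max D"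
    using path_in_finite[OF path] path unfolding path_in_def by auto
  have "i \<in> D \<longrightarrow> \<phi> i \<in> R" if "i \<le> Max D" for i
    using that
  proof (induction i rule: int_le_induct)
    case base
    show ?case using assms(4) by simp
  next
    case (step i)
    show ?case
    proof
      assume i1: "i - 1 \<in> D"
      have "i \<in> D" using D(1) i1 Max(1) step.hyps unfolding Z_interval_def by fastforce
      then have "\<phi> i \<in> Pi_V X V (\<phi> (i - 1)) \<inter> R" using D(3)[OF i1] step.IH by simp
      moreover have "\<phi> (i - 1) \<in> topspace X" using D(2) i1 assms(2) by blast
      ultimately show "\<phi> (i - 1) \<in> R" using backward unfolding Pi_V_inv_def by blast
    qed
  qed
  then show ?thesis using Max(2) by blast
qed

lemma isolates_topspace:
  assumes "multivector_field X V" "R \<subseteq> topspace X" "Pi_V_inv X V R \<subseteq> R"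
  shows "isolates X V (topspace X) R"
  unfolding isolates_def
proof (intro conjI allI impI)
  show "closedin X (topspace X)" "R \<subseteq> topspace X" by (simp_all add: assms(2))
  show "Pi_V_set X V R \<subseteq> topspace X"
    unfolding Pi_V_set_def Pi_V_def
  proof (intro UN_least Un_least)
    fix x assume "x \<in> R"
    then show "cell V x \<subseteq> topspace X"
      using cell_subset_topspace[OF assms(1)] assms(2) by blast
  qed (rule closure_of_subset_topspace)
  fix D \<phi>
  assume "path_in X V (topspace X) D \<phi> \<and> \<phi> (Min D) \<in> R \<and> \<phi> (Max D) \<in> R"
  then show "\<phi> ` D \<subseteq> R"
    using path_in_subset_if_Max_mem[OF _ subset_refl assms(3)] by simp
qed

lemma path_in_there_and_back:
  assumes "z \<in> Pi_V X V y" "y \<in> Pi_V X V z" "y \<in> N" "z \<in> N"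
  shows "path_in X V N {0, 1, 2} (\<lambda>i::int. if i = 1 then z else y)"
proof -
  have "Z_interval {0::int, 1, 2}"
    unfolding Z_interval_def by force
  moreover have "i = 0 \<or> i = 1" if "i \<in> {0::int, 1, 2}" "i + 1 \<in> {0::int, 1, 2}" for i
    using that by auto
  ultimately show ?thesis
    unfolding path_in_def solution_def using assms by auto
qed

lemma isolates_path_in_subset:
  assumes "isolates X V N S" "path_in X V N D \<phi>" "\<phi> (Min D) \<in> S" "\<phi> (Max D) \<in> S"
  shows "\<phi> ` D \<subseteq> S"
  using assms unfolding isolates_def by blast

lemma isolates_imp_compatible:
  assumes "multivector_field X V" and iso: "isolates X V N R"
  shows "compatible X V R"
  unfolding compatible_iff_cell_meets[OF assms(1)]
proof (intro ballI impI)
  fix z assume z: "z \<in> topspace X" "cell V z \<inter> R \<noteq> {}"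
  then obtain y where y: "y \<in> cell V z" "y \<in> R" by blast
  have "cell V y = cell V z" by (rule cell_eq_cell[OF assms(1) z(1) y(1)])
  then have zy: "z \<in> Pi_V X V y" and yz: "y \<in> Pi_V X V z"
    using y(1) mem_cell[OF assms(1) z(1)] unfolding Pi_V_def by auto
  have "y \<in> N" "z \<in> N"
    using iso y(2) zy unfolding isolates_def Pi_V_set_def by auto
  then have "path_in X V N {0, 1, 2} (\<lambda>i::int. if i = 1 then z else y)"
    by (rule path_in_there_and_back[OF zy yz])
  from isolates_path_in_subset[OF iso this]
  have "(\<lambda>i::int. if i = 1 then z else y) ` {0, 1, 2} \<subseteq> R"
    using y(2) by simp
  then show "z \<in> R" by auto
qed

theorem theorem6p3:
  fixes X :: "'a topology" and V :: "'a set set" and R :: "'a set"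
  assumes "finite_T0_space X"
    and "multivector_field X V"
    and "invariant X V (topspace X)"
    and "R \<subseteq> topspace X"
  shows "(repeller X V R \<longleftrightarrow> openin X R \<and> compatible X V R \<and> invariant X V R)
       \<and> (openin X R \<and> compatible X V R \<and> invariant X V R
            \<longleftrightarrow> openin X R \<and> isolated_invariant X V R)"
proof -
  have fin: "finite (topspace X)" using assms(1) unfolding finite_T0_space_def by blast
  note Pi_V_inv_iff = Pi_V_inv_eq_iff_open_compatible[OF fin assms(2,4)]
  have "openin X R \<and> compatible X V R \<Longrightarrow> isolates X V (topspace X) R"
    using isolates_topspace[OF assms(2,4)] Pi_V_inv_iff by simp
  then show ?thesis
    unfolding repeller_def isolated_invariant_def
    using Pi_V_inv_iff isolates_imp_compatible[OF assms(2)] by blast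
qed

end
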